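(* Let $E$ be a finite directed graph with $|E^1|=n\ge1$. Then $\mathrm{h}_{\mathrm{alg}}(L_K(E))\le\log(2n)$.
   Context: For a finite directed graph $E=(E^0,E^1,s,r)$, the Leavitt path algebra $L_K(E)$ over a field $K$ is generated by $E^0\cup E^1\cup\{e^*:e\in E^1\}$ subject to: $vw=\delta_{v,w}v$ for vertices; $s(e)e=e=er(e)$, $r(e)e^*=e^*=e^*s(e)$; $e^*f=\delta_{e,f}r(e)$; $\sum_{s(e)=v}ee^*=v$ for each vertex $v$ with $0<|s^{-1}(v)|<\infty$. Its standard filtration $W_m$ is the span of $\lambda\mu^*$ with $\lambda,\mu$ paths and $l(\lambda)+l(\mu)\le m$. $\mathrm{h}_{\mathrm{alg}}(L_K(E))=0$ if $L_K(E)$ is finite-dimensional and otherwise $\limsup_m\frac1m\log\dim(W_m/W_{m-1})$. *)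

theory Defs
  imports Complex_Main "HOL-Library.Liminf_Limsup" "HOL-Library.Extended_Real"
    "Graph_Theory.Digraph" "Graph_Theory.Arc_Walk"
begin

text \<open>Generators of the free algebra: vertices v, edges e, ghost edges e*.\<close>
datatype ('v,'e) lgen = V 'v | Ed 'e | Gh 'e

definition lgens :: "('v,'e) pre_digraph \<Rightarrow> ('v,'e) lgen set" where
  "lgens G = V ` verts G \<union> Ed ` arcs G \<union> Gh ` arcs G"

text \<open>Elements of the free algebra K<X>: coefficient functions on words (only finitely
  supported ones arise below). Monomials and the (convolution) product.\<close>
definition mon :: "'g list \<Rightarrow> 'g list \<Rightarrow> 'k::field" where
  "mon w = (\<lambda>u. if u = w then 1 else 0)"

definition fmul :: "('g list \<Rightarrow> 'k::field) \<Rightarrow> ('g list \<Rightarrow> 'k) \<Rightarrow> 'g list \<Rightarrow> 'k" where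
  "fmul f g = (\<lambda>w. \<Sum>i\<le>length w. f (take i w) * g (drop i w))"

definition fsub :: "('g list \<Rightarrow> 'k::field) \<Rightarrow> ('g list \<Rightarrow> 'k) \<Rightarrow> 'g list \<Rightarrow> 'k" where
  "fsub f g = (\<lambda>w. f w - g w)"

text \<open>The defining relations of L_K(E) (each written as r, meaning r = 0).
  Edges go from s(e) = tail G e to r(e) = head G e.\<close>
definition lrels :: "('v,'e) pre_digraph \<Rightarrow> (('v,'e) lgen list \<Rightarrow> 'k::field) set" where
  "lrels G =
     {fsub (mon [V v, V w]) (if v = w then mon [V v] else (\<lambda>_. 0)) | v w. v \<in> verts G \<and> w \<in> verts G}
   \<union> {fsub (mon [V (tail G e), Ed e]) (mon [Ed e]) | e. e \<in> arcs G}
   \<union> {fsub (mon [Ed e, V (head G e)]) (mon [Ed e]) | e. e \<in> arcs G}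
   \<union> {fsub (mon [V (head G e), Gh e]) (mon [Gh e]) | e. e \<in> arcs G}
   \<union> {fsub (mon [Gh e, V (tail G e)]) (mon [Gh e]) | e. e \<in> arcs G}
   \<union> {fsub (mon [Gh e, Ed f]) (if e = f then mon [V (head G e)] else (\<lambda>_. 0)) | e f. e \<in> arcs G \<and> f \<in> arcs G}
   \<union> {fsub (\<lambda>w. \<Sum>e\<in>out_arcs G v. mon [Ed e, Gh e] w) (mon [V v]) | v.
        v \<in> verts G \<and> out_arcs G v \<noteq> {} \<and> finite (out_arcs G v)}"

inductive_set lideal :: "('v,'e) pre_digraph \<Rightarrow> (('v,'e) lgen list \<Rightarrow> 'k::field) set"
  for G :: "('v,'e) pre_digraph" where
  zero: "(\<lambda>_. 0) \<in> lideal G"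
| add: "a \<in> lideal G \<Longrightarrow> b \<in> lideal G \<Longrightarrow> (\<lambda>w. a w + b w) \<in> lideal G"
| smult: "a \<in> lideal G \<Longrightarrow> (\<lambda>w. c * a w) \<in> lideal G"
| gen: "r \<in> lrels G \<Longrightarrow> u \<in> lists (lgens G) \<Longrightarrow> v \<in> lists (lgens G) \<Longrightarrow>
        fmul (fmul (mon u) r) (mon v) \<in> lideal G"

text \<open>A path is a pair (u, p): start vertex u and arc list p forming a walk in G
  (length 0 paths are the vertices).\<close>
definition is_path :: "('v,'e) pre_digraph \<Rightarrow> 'v \<times> 'e list \<Rightarrow> bool" where
  "is_path G p = (\<exists>w. pre_digraph.awalk G (fst p) (snd p) w)"

definition pword :: "'v \<times> 'e list \<Rightarrow> ('v,'e) lgen list" where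
  "pword p = (if snd p = [] then [V (fst p)] else map Ed (snd p))"

definition gword :: "'v \<times> 'e list \<Rightarrow> ('v,'e) lgen list" where
  "gword q = (if snd q = [] then [V (fst q)] else map Gh (rev (snd q)))"

definition lmstar :: "('v \<times> 'e list) \<times> ('v \<times> 'e list) \<Rightarrow> ('v,'e) lgen list \<Rightarrow> 'k::field" where
  "lmstar x = mon (pword (fst x) @ gword (snd x))"

text \<open>Index set for the spanning set of W_m.\<close>
definition PP :: "('v,'e) pre_digraph \<Rightarrow> nat \<Rightarrow> (('v \<times> 'e list) \<times> ('v \<times> 'e list)) set" where
  "PP G m = {(p, q). is_path G p \<and> is_path G q \<and> length (snd p) + length (snd q) \<le> m}"

text \<open>The images in L_K(E) of the lambda mu*, x in S, are linearly independent modulo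
  the span of the images of the lambda mu*, y in T.\<close>
definition indep_mod :: "('v,'e) pre_digraph \<Rightarrow> 'k::field itself \<Rightarrow>
    (('v \<times> 'e list) \<times> ('v \<times> 'e list)) set \<Rightarrow> (('v \<times> 'e list) \<times> ('v \<times> 'e list)) set \<Rightarrow> bool" where
  "indep_mod G K S T = (finite S \<and> (\<forall>(c :: _ \<Rightarrow> 'k) (d :: _ \<Rightarrow> 'k) T'. finite T' \<and> T' \<subseteq> T \<longrightarrow>
      (\<lambda>w. (\<Sum>x\<in>S. c x * lmstar x w) + (\<Sum>y\<in>T'. d y * lmstar y w)) \<in> lideal G \<longrightarrow>
      (\<forall>x\<in>S. c x = 0)))"

text \<open>dim_K (W_m / W_{m-1}), with W_{-1} = 0.\<close>
definition grdim :: "('v,'e) pre_digraph \<Rightarrow> 'k::field itself \<Rightarrow> nat \<Rightarrow> nat" where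
  "grdim G K m = Max {card S | S. S \<subseteq> PP G m \<and>
      indep_mod G K S (if m = 0 then {} else PP G (m - 1))}"

definition lpa_fin_dim :: "('v,'e) pre_digraph \<Rightarrow> 'k::field itself \<Rightarrow> bool" where
  "lpa_fin_dim G K = (\<exists>B :: (('v,'e) lgen list \<Rightarrow> 'k) set. finite B \<and>
      (\<forall>w \<in> lists (lgens G). w \<noteq> [] \<longrightarrow>
         (\<exists>a c. a \<in> lideal G \<and> mon w = (\<lambda>u. a u + (\<Sum>b\<in>B. c b * b u)))))"

text \<open>Algebraic entropy; log 0 is read as -infinity.\<close>
definition h_alg :: "('v,'e) pre_digraph \<Rightarrow> 'k::field itself \<Rightarrow> ereal" where
  "h_alg G K = (if lpa_fin_dim G K then 0 else
     limsup (\<lambda>m. if grdim G K m = 0 then -\<infinity> else ereal (ln (real (grdim G K m)) / real m)))"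

end

theory Submission
  imports Defs "HOL-Real_Asymp.Real_Asymp"
begin

text \<open>The quotient W_m / W_(m-1) is spanned by the images of the elements \<open>\<lambda>\<mu>*\<close> with
  \<open>l(\<lambda>) + l(\<mu>) \<le> m\<close>. Such a pair of paths is determined by its two start vertices, the
  length of \<open>\<lambda>\<close> and the concatenated edge word of length at most m, so there are at most
  \<open>|E\<^sup>0|\<^sup>2 (m + 1)\<^sup>2 n\<^sup>m\<close> of them. The polynomial factor is eventually dominated by
  \<open>2\<^sup>m\<close>, hence \<open>dim (W_m / W_(m-1)) \<le> (2n)\<^sup>m\<close> for all large m.\<close>

lemma card_lists_length_le_le:
  assumes "finite A" and "A \<noteq> {}"
  shows "card {xs. set xs \<subseteq> A \<and> length xs \<le> m} \<le> (m + 1) * card A ^ m"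
proof -
  have "card {xs. set xs \<subseteq> A \<and> length xs \<le> m} = (\<Sum>i\<le>m. card A ^ i)"
    using assms(1) by (rule card_lists_length_le)
  also have "\<dots> \<le> (\<Sum>i\<le>m. card A ^ m)"
    using assms by (intro sum_mono power_increasing) (auto simp: Suc_le_eq card_gt_0_iff)
  finally show ?thesis by simp
qed

lemma card_list_pairs_length_le:
  assumes "finite A" and "A \<noteq> {}"
  shows "card {(p, q). set p \<subseteq> A \<and> set q \<subseteq> A \<and> length p + length q \<le> m}
           \<le> (m + 1)\<^sup>2 * card A ^ m"
proof -
  let ?P = "{(p, q). set p \<subseteq> A \<and> set q \<subseteq> A \<and> length p + length q \<le> m}"
  let ?L = "{xs. set xs \<subseteq> A \<and> length xs \<le> m}"
  let ?split = "\<lambda>(p :: 'a list, q). (length p, p @ q)"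
  have "inj_on ?split ?P"
    by (auto simp: inj_on_def)
  moreover have "?split ` ?P \<subseteq> {..m} \<times> ?L"
    by auto
  moreover have "finite ?L"
    using assms(1) by (rule finite_lists_length_le)
  ultimately have "card ?P \<le> card ({..m} \<times> ?L)"
    by (intro card_inj_on_le) auto
  also have "\<dots> = (m + 1) * card ?L"
    by (simp add: card_cartesian_product)
  also have "\<dots> \<le> (m + 1) * ((m + 1) * card A ^ m)"
    using card_lists_length_le_le[OF assms] by (rule mult_le_mono2)
  finally show ?thesis
    by (simp only: power2_eq_square mult.assoc)
qed

context fin_digraph
begin

lemma PP_subset: "PP G m \<subseteq> {((u, p), (v, q)). u \<in> verts G \<and> v \<in> verts G \<and>
    set p \<subseteq> arcs G \<and> set q \<subseteq> arcs G \<and> length p + length q \<le> m}"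
  by (auto simp: PP_def is_path_def awalk_def)

lemma finite_PP: "finite (PP G m)"
proof (rule finite_subset)
  let ?L = "{xs. set xs \<subseteq> arcs G \<and> length xs \<le> m}"
  show "PP G m \<subseteq> (verts G \<times> ?L) \<times> (verts G \<times> ?L)"
    using PP_subset[of m] by fastforce
  show "finite ((verts G \<times> ?L) \<times> (verts G \<times> ?L))"
    using finite_lists_length_le[of "arcs G" m] by auto
qed

lemma card_PP_le:
  assumes "arcs G \<noteq> {}"
  shows "card (PP G m) \<le> card (verts G) ^ 2 * (m + 1)\<^sup>2 * card (arcs G) ^ m"
proof -
  let ?P = "{(p, q). set p \<subseteq> arcs G \<and> set q \<subseteq> arcs G \<and> length p + length q \<le> m}"
  let ?L = "{xs. set xs \<subseteq> arcs G \<and> length xs \<le> m}"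
  let ?regroup = "\<lambda>((u :: 'a, p :: 'b list), (v, q)). ((u, v), (p, q))"
  have "inj_on ?regroup (PP G m)"
    by (auto simp: inj_on_def)
  moreover have "?regroup ` PP G m \<subseteq> (verts G \<times> verts G) \<times> ?P"
    using PP_subset[of m] by fastforce
  moreover have "finite ?P"
    by (rule finite_subset[of _ "?L \<times> ?L"]) (use finite_lists_length_le[of "arcs G" m] in auto)
  ultimately have "card (PP G m) \<le> card ((verts G \<times> verts G) \<times> ?P)"
    by (intro card_inj_on_le) auto
  also have "\<dots> \<le> card (verts G) ^ 2 * ((m + 1)\<^sup>2 * card (arcs G) ^ m)"
    using card_list_pairs_length_le[OF finite_arcs assms, of m]
    by (simp add: card_cartesian_product power2_eq_square)
  finally show ?thesis
    by (simp add: mult.assoc)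
qed

end

lemma grdim_le_card_PP:
  assumes "finite (PP G m)"
  shows "grdim G K m \<le> card (PP G m)"
  unfolding grdim_def
proof (rule Max.boundedI)
  let ?C = "{card S | S. S \<subseteq> PP G m \<and> indep_mod G K S (if m = 0 then {} else PP G (m - 1))}"
  show "finite ?C"
    by (rule finite_subset[of _ "{..card (PP G m)}"]) (use card_mono[OF assms] in auto)
  have "indep_mod G K {} T" for T
    by (simp add: indep_mod_def)
  then show "?C \<noteq> {}"
    by blast
  fix c
  assume "c \<in> ?C"
  then show "c \<le> card (PP G m)"
    using card_mono[OF assms] by auto
qed

lemma eventually_poly_le_pow2:
  fixes c :: real
  shows "eventually (\<lambda>m. c * (real m + 1)\<^sup>2 \<le> 2 ^ m) sequentially"
proof -
  have "(\<lambda>m. c * (real m + 1)\<^sup>2 / 2 ^ m) \<longlonglongrightarrow> 0"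
    by real_asymp
  then have "eventually (\<lambda>m. c * (real m + 1)\<^sup>2 / 2 ^ m < 1) sequentially"
    by (rule order_tendstoD) simp
  then show ?thesis
    by eventually_elim (simp add: divide_less_eq)
qed

lemma (in fin_digraph) eventually_grdim_le:
  assumes "arcs G \<noteq> {}"
  shows "eventually (\<lambda>m. real (grdim G K m) \<le> (2 * real (card (arcs G))) ^ m) sequentially"
  using eventually_poly_le_pow2[of "real (card (verts G)) ^ 2"]
proof eventually_elim
  case (elim m)
  let ?n = "real (card (arcs G))"
  have "grdim G K m \<le> card (verts G) ^ 2 * (m + 1)\<^sup>2 * card (arcs G) ^ m"
    using grdim_le_card_PP[OF finite_PP] card_PP_le[OF assms] by (rule order_trans)
  then have "real (grdim G K m) \<le> real (card (verts G) ^ 2 * (m + 1)\<^sup>2 * card (arcs G) ^ m)"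
    by (rule of_nat_mono)
  also have "\<dots> = real (card (verts G)) ^ 2 * (real m + 1)\<^sup>2 * ?n ^ m"
    by simp
  also have "\<dots> \<le> 2 ^ m * ?n ^ m"
    using elim by (intro mult_right_mono) auto
  finally show ?case
    by (simp add: power_mult_distrib)
qed

lemma h_alg_le_ln:
  fixes b :: real
  assumes "1 \<le> b" and "eventually (\<lambda>m. real (grdim G K m) \<le> b ^ m) sequentially"
  shows "h_alg G K \<le> ereal (ln b)"
proof -
  let ?g = "\<lambda>m. real (grdim G K m)"
  have "eventually (\<lambda>m. (if grdim G K m = 0 then -\<infinity> else ereal (ln (?g m) / real m))
      \<le> ereal (ln b)) sequentially"
    using assms(2) eventually_gt_at_top[of 0]
  proof eventually_elim
    case (elim m)
    have "grdim G K m > 0 \<Longrightarrow> ln (?g m) \<le> real m * ln b"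
      using elim(1) assms(1) by (subst ln_realpow[symmetric]) auto
    then show ?case
      using elim(2) by (auto simp: divide_le_eq mult.commute)
  qed
  then have "limsup (\<lambda>m. if grdim G K m = 0 then -\<infinity> else ereal (ln (?g m) / real m))
      \<le> ereal (ln b)"
    by (rule Limsup_bounded)
  then show ?thesis
    using assms(1) by (simp add: h_alg_def)
qed

theorem corollary4p6:
  fixes G :: "('v,'e) pre_digraph"
  assumes "fin_digraph G"
    and "card (arcs G) = n" and "n \<ge> 1"
  shows "h_alg G TYPE('k::field) \<le> ereal (ln (2 * real n))"
proof -
  interpret fin_digraph G
    by fact
  have "arcs G \<noteq> {}"
    using assms(2,3) by auto
  then have "eventually (\<lambda>m. real (grdim G TYPE('k) m) \<le> (2 * real n) ^ m) sequentially"
    using eventually_grdim_le assms(2) by blast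
  then show ?thesis
    using assms(3) by (intro h_alg_le_ln) auto
qed

end
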